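(* Let $A,L,\ddot L,G,\langle A_G\mid R_G\rangle,X=A\cup A_G,\mathsf f,\check{\mathsf f}$ be as in the context, and let $T$ be the semigroup defined by the presentation $\langle X\mid R_G\cup R_{\mathsf f}\rangle$. Then for every word $w\in X^+$, $w=\check{\mathsf f}(w)$ holds in $T$.
   Context: Let $A$ be an alphabet; for $w=a_1\cdots a_n\in A^+$, $w[p,q]=a_p\cdots a_q$, $w_\alpha=w[1,n-1]$, $w_\omega=w[2,n]$. $L\subseteq A^+$ is a non-empty factorial language (closed under non-empty factors) with $A\subseteq L$, $L^1=L\cup\{1\}$, and $\ddot L=\{v\in A^+: v\notin L,\ v_\alpha,v_\omega\in L\}$. For $w\in L$, $\mathrm{sc}_L[w]=(w)$; for $w\notin L$, letting $w[p_1,q_1],\dots,w[p_m,q_m]$ be all occurrences in $w$ of factors in $\ddot L$ from left to right, $\ddot w_i=w[p_i,q_i]$, $w_0=w[1,q_1-1]$, $w_m=w[p_m+1,n]$, $w_i=w[p_i+1,q_{i+1}-1]$ ($0<i<m$), and $\mathrm{sc}_L[w]=(w_0,\ddot w_1,w_1,\dots,\ddot w_m,w_m)$. $G$ is a group with semigroup presentation $\langle A_G\mid R_G\rangle$, $A_G\cap A=\emptyset$; each $g\in G$ is identified with a fixed word of $A_G^+$ representing it, and $e$ denotes the fixed word representing $1_G$. $X=A\cup A_G$, $\mathsf f:L\cup\ddot L\to G$ is a function, and $R_{\mathsf f}$ consists of the relations $eue=\mathsf f(u)$ for $u\in L$ and $\ddot v=\ddot v_\alpha\,\mathsf f(\ddot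 v)\,\ddot v_\omega$ for $\ddot v\in\ddot L$ (elements of $G$ written as their fixed representative words). $\hat{\mathsf f}:A^*\to G$: $\hat{\mathsf f}(1)=1_G$, $\hat{\mathsf f}(w)=\mathsf f(w)$ for $w\in L$, else $\hat{\mathsf f}(w)=\mathsf f(w_0)\mathsf f(\ddot w_1)\mathsf f(w_1)\cdots\mathsf f(\ddot w_m)\mathsf f(w_m)$. For $w\in A^+$: $\check{\mathsf f}(w)=w$ if $w\in L$, else $\check{\mathsf f}(w)=w_0\,g_w\,w_m$ with $g_w=\mathsf f(\ddot w_1)\mathsf f(w_1)\cdots\mathsf f(w_{m-1})\mathsf f(\ddot w_m)$. For $u\in A^*$: $\grave{\mathsf f}(u)=\acute{\mathsf f}(u)=u$ if $u\in L^1$; otherwise $\grave{\mathsf f}(u)=u_0(g_u\mathsf f(u_m))$, $\acute{\mathsf f}(u)=(\mathsf f(u_0)g_u)u_m$. For $w=u_0g_1u_1\cdots g_nu_n\in X^+\setminus A^+$ ($u_0,u_n\in A^*$, $u_1,\dots,u_{n-1}\in A^+$, $g_i\in A_G^+$): $\check{\mathsf f}(w)=\grave{\mathsf f}(u_0)g_1\hat{\mathsf f}(u_1)\cdots\hat{\mathsf f}(u_{n-1})g_n\acute{\mathsf f}(u_n)$, with adjacent group factors multiplied in $G$ and replaced by the fixed representative of the product. *)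

theory Defs
  imports Main
begin

text \<open>Words are lists; the alphabet A is the type 'a, the group alphabet A_G is the
type 'b, and X = A \<union> A_G is the disjoint sum 'a + 'b (Inl = letters of A,
Inr = letters of A_G).  Positions are 0-based.\<close>

definition step :: "('c list \<times> 'c list) set \<Rightarrow> ('c list \<times> 'c list) set" where
  "step R = {(x @ l @ y, x @ r @ y) | x l r y. (l, r) \<in> R}"

definition pres_eq :: "('c list \<times> 'c list) set \<Rightarrow> ('c list \<times> 'c list) set" where
  "pres_eq R = (step R \<union> (step R)\<inverse>)\<^sup>*"

definition group_presentation :: "('b list \<times> 'b list) set \<Rightarrow> bool" where
  "group_presentation RG \<longleftrightarrow>
     (\<forall>(l, r) \<in> RG. l \<noteq> [] \<and> r \<noteq> []) \<and>
     (\<exists>i. i \<noteq> [] \<and> (\<forall>w. w \<noteq> [] \<longrightarrow>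
        (i @ w, w) \<in> pres_eq RG \<and> (w @ i, w) \<in> pres_eq RG \<and>
        (\<exists>v. v \<noteq> [] \<and> (w @ v, i) \<in> pres_eq RG \<and> (v @ w, i) \<in> pres_eq RG)))"

definition fixed_reps :: "('b list \<times> 'b list) set \<Rightarrow> ('b list \<Rightarrow> 'b list) \<Rightarrow> bool" where
  "fixed_reps RG rep \<longleftrightarrow>
     (\<forall>w. w \<noteq> [] \<longrightarrow> rep w \<noteq> [] \<and> (rep w, w) \<in> pres_eq RG) \<and>
     (\<forall>w v. w \<noteq> [] \<longrightarrow> v \<noteq> [] \<longrightarrow> (w, v) \<in> pres_eq RG \<longrightarrow> rep w = rep v)"

text \<open>The elements of G, as their fixed representative words.\<close>
definition Gelems :: "('b list \<Rightarrow> 'b list) \<Rightarrow> 'b list set" where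
  "Gelems rep = rep ` {w. w \<noteq> []}"

definition is_identity :: "('b list \<times> 'b list) set \<Rightarrow> 'b list \<Rightarrow> bool" where
  "is_identity RG e \<longleftrightarrow> e \<noteq> [] \<and>
     (\<forall>w. w \<noteq> [] \<longrightarrow> (e @ w, w) \<in> pres_eq RG \<and> (w @ e, w) \<in> pres_eq RG)"

definition factorial_lang :: "'a list set \<Rightarrow> bool" where
  "factorial_lang L \<longleftrightarrow> (\<forall>w\<in>L. w \<noteq> []) \<and>
     (\<forall>w\<in>L. \<forall>x y z. w = x @ y @ z \<longrightarrow> y \<noteq> [] \<longrightarrow> y \<in> L)"

definition ddotL :: "'a list set \<Rightarrow> 'a list set" where
  "ddotL L = {v. v \<noteq> [] \<and> v \<notin> L \<and> butlast v \<in> L \<and> tl v \<in> L}"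

text \<open>factor w p q = w[p,q] (0-based, inclusive).\<close>
definition factor :: "'a list \<Rightarrow> nat \<Rightarrow> nat \<Rightarrow> 'a list" where
  "factor w p q = take (Suc q - p) (drop p w)"

definition occs :: "'a list set \<Rightarrow> 'a list \<Rightarrow> (nat \<times> nat) list" where
  "occs L w = [(p, q). p \<leftarrow> [0..<length w], q \<leftarrow> [p..<length w], factor w p q \<in> ddotL L]"

text \<open>sc_L[w] = (w_0, dd_1, w_1, ..., dd_m, w_m) as a list.\<close>
definition sc :: "'a list set \<Rightarrow> 'a list \<Rightarrow> 'a list list" where
  "sc L w = (if w \<in> L then [w] else
     (let oc = occs L w; m = length oc in
       take (snd (oc ! 0)) w #
       concat (map (\<lambda>i. [factor w (fst (oc ! i)) (snd (oc ! i)),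
                          (if Suc i < m
                           then take (snd (oc ! Suc i) - fst (oc ! i) - 1) (drop (Suc (fst (oc ! i))) w)
                           else drop (Suc (fst (oc ! i))) w)]) [0..<m])))"

text \<open>Products in G are computed as the fixed representative of the concatenation.\<close>
definition hatf :: "'a list set \<Rightarrow> ('b list \<Rightarrow> 'b list) \<Rightarrow> 'b list \<Rightarrow> ('a list \<Rightarrow> 'b list)
                    \<Rightarrow> 'a list \<Rightarrow> 'b list" where
  "hatf L rep e f u = (if u = [] then e else if u \<in> L then f u
                       else rep (concat (map f (sc L u))))"

definition gw :: "'a list set \<Rightarrow> ('b list \<Rightarrow> 'b list) \<Rightarrow> ('a list \<Rightarrow> 'b list) \<Rightarrow> 'a list \<Rightarrow> 'b list" where
  "gw L rep f w = rep (concat (map f (butlast (tl (sc L w)))))"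

definition checkA :: "'a list set \<Rightarrow> ('b list \<Rightarrow> 'b list) \<Rightarrow> ('a list \<Rightarrow> 'b list)
                      \<Rightarrow> 'a list \<Rightarrow> ('a + 'b) list" where
  "checkA L rep f w = (if w \<in> L then map Inl w
     else map Inl (hd (sc L w)) @ map Inr (gw L rep f w) @ map Inl (last (sc L w)))"

text \<open>Items: Inl a is a letter of A, Inr g a group factor (a word over A_G).\<close>
definition grave :: "'a list set \<Rightarrow> ('b list \<Rightarrow> 'b list) \<Rightarrow> ('a list \<Rightarrow> 'b list)
                     \<Rightarrow> 'a list \<Rightarrow> ('a + 'b list) list" where
  "grave L rep f u = (if u = [] \<or> u \<in> L then map Inl u
     else map Inl (hd (sc L u)) @ [Inr (rep (gw L rep f u @ f (last (sc L u))))])"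

definition acute :: "'a list set \<Rightarrow> ('b list \<Rightarrow> 'b list) \<Rightarrow> ('a list \<Rightarrow> 'b list)
                     \<Rightarrow> 'a list \<Rightarrow> ('a + 'b list) list" where
  "acute L rep f u = (if u = [] \<or> u \<in> L then map Inl u
     else [Inr (rep (f (hd (sc L u)) @ gw L rep f u))] @ map Inl (last (sc L u)))"

fun merge :: "('b list \<Rightarrow> 'b list) \<Rightarrow> ('a + 'b list) list \<Rightarrow> ('a + 'b list) list" where
  "merge rep [] = []"
| "merge rep (Inr g # Inr h # xs) = merge rep (Inr (rep (g @ h)) # xs)"
| "merge rep (x # xs) = x # merge rep xs"

definition flatten :: "('a + 'b list) list \<Rightarrow> ('a + 'b) list" where
  "flatten xs = concat (map (case_sum (\<lambda>a. [Inl a]) (\<lambda>g. map Inr g)) xs)"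

text \<open>Decomposition of a word starting with a letter of A_G (or empty) into
 (g_1,u_1),...,(g_n,u_n) with g_i maximal blocks of A_G letters.\<close>
function segs :: "('a + 'b) list \<Rightarrow> ('b list \<times> 'a list) list" where
  "segs [] = []"
| "segs (x # xs) =
     (let r = dropWhile (Not \<circ> isl) (x # xs) in
      (map projr (takeWhile (Not \<circ> isl) (x # xs)), map projl (takeWhile isl r))
        # segs (dropWhile isl r))"
  by pat_completeness auto
termination
  apply (relation "measure length")
   apply simp
  subgoal for x xs r
    using length_dropWhile_le[of isl "dropWhile (Not \<circ> isl) xs"]
          length_dropWhile_le[of "Not \<circ> isl" xs] length_dropWhile_le[of isl xs]
    by (cases "isl x") (auto simp: Let_def)
  done

text \<open>check f on X^+: for w = u_0 g_1 u_1 ... g_n u_n.\<close>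
definition checkX :: "'a list set \<Rightarrow> ('b list \<Rightarrow> 'b list) \<Rightarrow> 'b list \<Rightarrow> ('a list \<Rightarrow> 'b list)
                      \<Rightarrow> ('a + 'b) list \<Rightarrow> ('a + 'b) list" where
  "checkX L rep e f w = (if \<forall>x\<in>set w. isl x then checkA L rep f (map projl w) else
     (let u0 = map projl (takeWhile isl w); sg = segs (dropWhile isl w); n = length sg in
      flatten (merge rep
        (grave L rep f u0 @
         concat (map (\<lambda>i. [Inr (fst (sg ! i))] @
                          (if Suc i < n then [Inr (hatf L rep e f (snd (sg ! i)))] else [])) [0..<n]) @
         acute L rep f (snd (last sg))))))"

definition RG_X :: "('b list \<times> 'b list) set \<Rightarrow> (('a + 'b) list \<times> ('a + 'b) list) set" where
  "RG_X RG = {(map Inr l, map Inr r) | l r. (l, r) \<in> RG}"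

definition Rf :: "'a list set \<Rightarrow> ('a list \<Rightarrow> 'b list) \<Rightarrow> 'b list
                  \<Rightarrow> (('a + 'b) list \<times> ('a + 'b) list) set" where
  "Rf L f e =
     {(map Inr e @ map Inl u @ map Inr e, map Inr (f u)) | u. u \<in> L} \<union>
     {(map Inl v, map Inl (butlast v) @ map Inr (f v) @ map Inl (tl v)) | v. v \<in> ddotL L}"

end

theory Submission
  imports Defs "HOL-Library.Product_Lexorder"
begin

text \<open>Inside T, a word of A sandwiched between two non-empty group words can be replaced by
its value in G: insert the identity e on both sides and use the relation e u e = f(u).  A word
u outside L is first rewritten, from left to right, with the relations for the occurrences of
factors in ddot L; this produces u_0 g u_m, where the A-words between
consecutive forbidden occurrences lie in L and are now flanked by group letters, so they are
absorbed into g.  The claim for a mixed word then follows segment by segment, and merging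
adjacent group factors is harmless because each merged word equals its representative in G.\<close>

lemma pres_eq_refl: "(a, a) \<in> pres_eq R"
  unfolding pres_eq_def by simp

lemma pres_eq_sym: "(a, b) \<in> pres_eq R \<Longrightarrow> (b, a) \<in> pres_eq R"
proof -
  have "sym ((step R \<union> (step R)\<inverse>)\<^sup>*)"
    by (rule sym_rtrancl) (auto simp: sym_def)
  then show "(a, b) \<in> pres_eq R \<Longrightarrow> (b, a) \<in> pres_eq R"
    unfolding pres_eq_def by (auto simp: sym_def)
qed

lemma pres_eq_trans: "(a, b) \<in> pres_eq R \<Longrightarrow> (b, c) \<in> pres_eq R \<Longrightarrow> (a, c) \<in> pres_eq R"
  unfolding pres_eq_def by (rule rtrancl_trans)

lemma pres_eq_rel: "(l, r) \<in> R \<Longrightarrow> (l, r) \<in> pres_eq R"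
proof -
  assume "(l, r) \<in> R"
  then have "([] @ l @ [], [] @ r @ []) \<in> step R" unfolding step_def by blast
  then show ?thesis unfolding pres_eq_def by auto
qed

lemma pres_eq_map_step:
  assumes "\<And>a b. (a, b) \<in> step R \<Longrightarrow> (h a, h b) \<in> step R'"
    and "(a, b) \<in> pres_eq R"
  shows "(h a, h b) \<in> pres_eq R'"
  using assms(2) unfolding pres_eq_def
proof (induction rule: rtrancl_induct)
  case base then show ?case by simp
next
  case (step b c)
  then have "(h b, h c) \<in> step R' \<union> (step R')\<inverse>" using assms(1) by blast
  with step.IH show ?case by (rule rtrancl_into_rtrancl)
qed

lemma pres_eq_append_cong: "(a, b) \<in> pres_eq R \<Longrightarrow> (x @ a @ y, x @ b @ y) \<in> pres_eq R"
  by (rule pres_eq_map_step[where h = "\<lambda>z. x @ z @ y"])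
     (auto simp: step_def, metis append.assoc)

lemma pres_eq_mono:
  assumes "R \<subseteq> R'" and "(a, b) \<in> pres_eq R"
  shows "(a, b) \<in> pres_eq R'"
  using pres_eq_map_step[where h = id and R' = R', OF _ assms(2)] assms(1)
  unfolding step_def by fastforce

lemma pres_eq_map_Inr: "(a, b) \<in> pres_eq RG \<Longrightarrow> (map Inr a, map Inr b) \<in> pres_eq (RG_X RG)"
  by (rule pres_eq_map_step[where h = "map Inr"])
     (auto simp: step_def RG_X_def, metis map_append)

lemma ddotL_proper_factor_in_L:
  assumes "factorial_lang L" "v \<in> ddotL L" "v = x @ y @ z" "y \<noteq> []" "x \<noteq> [] \<or> z \<noteq> []"
  shows "y \<in> L"
proof (cases "x = []")
  case False
  then have "tl v = tl x @ y @ z" using assms(3) by simp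
  moreover have "tl v \<in> L" using assms(2) unfolding ddotL_def by simp
  ultimately show ?thesis using assms(1,4) unfolding factorial_lang_def by blast
next
  case True
  then have "z \<noteq> []" using assms(5) by simp
  then have "butlast v = x @ y @ butlast z" using assms(3) by (simp add: butlast_append)
  moreover have "butlast v \<in> L" using assms(2) unfolding ddotL_def by simp
  ultimately show ?thesis using assms(1,4) unfolding factorial_lang_def by blast
qed

lemma length_ddotL_ge_2: "\<forall>a. [a] \<in> L \<Longrightarrow> v \<in> ddotL L \<Longrightarrow> 2 \<le> length v"
  unfolding ddotL_def by (cases v; cases "tl v") auto

lemma length_factor: "p \<le> q \<Longrightarrow> q < length u \<Longrightarrow> length (factor u p q) = Suc q - p"
  unfolding factor_def by simp

lemma take_factor_drop: "p \<le> q \<Longrightarrow> q < length u \<Longrightarrow> u = take p u @ factor u p q @ drop (Suc q) u"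
proof -
  assume a: "p \<le> q" "q < length u"
  have "u = take p u @ drop p u" by simp
  also have "drop p u = take (Suc q - p) (drop p u) @ drop (Suc q - p) (drop p u)"
    by (rule append_take_drop_id[symmetric])
  also have "drop (Suc q - p) (drop p u) = drop (Suc q) u" using a by simp
  finally show ?thesis unfolding factor_def .
qed

lemma factor_factor: "i \<le> j \<Longrightarrow> j \<le> b - a \<Longrightarrow> a \<le> b \<Longrightarrow>
    factor (factor u a b) i j = factor u (a + i) (a + j)"
  unfolding factor_def by (simp add: drop_take min_def add.commute)

lemma factor_all: "v \<noteq> [] \<Longrightarrow> factor v 0 (length v - 1) = v"
  unfolding factor_def by simp

text \<open>Every word outside L has a factor in ddot L: shrink it from either end while it stays outside L.\<close>

lemma exists_ddotL_factor:
  assumes "\<forall>a. [a] \<in> L"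
  shows "v \<noteq> [] \<Longrightarrow> v \<notin> L \<Longrightarrow> \<exists>p q. p \<le> q \<and> q < length v \<and> factor v p q \<in> ddotL L"
proof (induction v rule: length_induct)
  case (1 v)
  have len: "2 \<le> length v"
    using 1(2,3) assms by (cases v; cases "tl v") auto
  consider "butlast v \<in> L" "tl v \<in> L" | "butlast v \<notin> L" | "tl v \<notin> L" by blast
  then show ?case
  proof cases
    case 1
    then have "v \<in> ddotL L" using "1.prems" unfolding ddotL_def by simp
    then show ?thesis using factor_all[of v] "1.prems"
      by (intro exI[of _ 0] exI[of _ "length v - 1"]) auto
  next
    case 2
    have "butlast v \<noteq> []" using len by (cases v rule: rev_cases) auto
    then obtain p q where pq: "p \<le> q" "q < length (butlast v)" "factor (butlast v) p q \<in> ddotL L"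
      using "1.IH"[rule_format, of "butlast v"] 2 len by force
    have "factor (butlast v) p q = factor v p q"
      using pq(1,2) unfolding factor_def
      by (auto simp: butlast_conv_take take_drop min_def split: if_splits)
    then show ?thesis using pq by (intro exI[of _ p] exI[of _ q]) auto
  next
    case 3
    have "tl v \<noteq> []" using len by (cases v) auto
    then obtain p q where pq: "p \<le> q" "q < length (tl v)" "factor (tl v) p q \<in> ddotL L"
      using "1.IH"[rule_format, of "tl v"] 3 len by force
    have "factor (tl v) p q = factor v (Suc p) (Suc q)"
      unfolding factor_def by (simp add: drop_Suc)
    then show ?thesis using pq by (intro exI[of _ "Suc p"] exI[of _ "Suc q"]) auto
  qed
qed

lemma factor_in_L_if_no_ddotL_factor:
  assumes "\<forall>a. [a] \<in> L" "a \<le> b" "b < length u"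
    and "\<forall>p q. a \<le> p \<longrightarrow> p \<le> q \<longrightarrow> q \<le> b \<longrightarrow> factor u p q \<notin> ddotL L"
  shows "factor u a b \<in> L"
proof (rule ccontr)
  assume "factor u a b \<notin> L"
  moreover have "factor u a b \<noteq> []" using assms(2,3) length_factor[of a b u] by auto
  ultimately obtain p q where
    pq: "p \<le> q" "q < length (factor u a b)" "factor (factor u a b) p q \<in> ddotL L"
    using exists_ddotL_factor[OF assms(1)] by blast
  have "q \<le> b - a" using pq(2) length_factor[of a b u] assms(2,3) by simp
  then have "factor (factor u a b) p q = factor u (a + p) (a + q)"
    using factor_factor pq(1) assms(2) by blast
  moreover have "a + q \<le> b" using \<open>q \<le> b - a\<close> assms(2) by simp
  ultimately show False using assms(4)[rule_format, of "a + p" "a + q"] pq(1,3) by simp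
qed

lemma ddotL_factor_nested_eq:
  assumes "factorial_lang L" "p \<le> p'" "p' \<le> q'" "q' \<le> q" "q < length u"
    "factor u p q \<in> ddotL L" "factor u p' q' \<in> ddotL L"
  shows "p = p' \<and> q = q'"
proof -
  define v where "v = factor u p q"
  have lv: "length v = Suc q - p" unfolding v_def using length_factor[of p q u] assms(2-5) by simp
  have inner: "factor v (p' - p) (q' - p) = factor u p' q'"
    unfolding v_def using factor_factor[of "p' - p" "q' - p" q p u] assms by simp
  have split: "v = take (p' - p) v @ factor v (p' - p) (q' - p) @ drop (Suc (q' - p)) v"
    using take_factor_drop[of "p' - p" "q' - p" v] assms lv by simp
  have "take (p' - p) v = [] \<and> drop (Suc (q' - p)) v = []"
  proof (rule ccontr)
    assume "\<not> ?thesis"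
    then have "factor u p' q' \<in> L"
      using ddotL_proper_factor_in_L[OF assms(1), of v "take (p' - p) v" "factor v (p' - p) (q' - p)"
          "drop (Suc (q' - p)) v"]
        split inner assms(6,7) v_def unfolding ddotL_def by auto
    then show False using assms(7) unfolding ddotL_def by simp
  qed
  then show ?thesis using lv assms by auto
qed

lemma concat_map_if_singleton: "concat (map (\<lambda>q. if P q then [g q] else []) xs) = map g (filter P xs)"
  by (induction xs) auto

lemma sorted_wrt_concat_map:
  assumes "sorted_wrt Q xs" "\<And>x. x \<in> set xs \<Longrightarrow> sorted_wrt R (F x)"
    "\<And>x y a b. x \<in> set xs \<Longrightarrow> y \<in> set xs \<Longrightarrow> Q x y \<Longrightarrow> a \<in> set (F x) \<Longrightarrow> b \<in> set (F y) \<Longrightarrow> R a b"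
  shows "sorted_wrt R (concat (map F xs))"
  using assms
proof (induction xs)
  case Nil then show ?case by simp
next
  case (Cons x xs)
  have "sorted_wrt R (concat (map F xs))"
    by (rule Cons.IH) (use Cons.prems in \<open>simp_all, meson list.set_intros(2)\<close>)
  moreover have "\<forall>a\<in>set (F x). \<forall>b\<in>set (concat (map F xs)). R a b"
  proof (intro ballI)
    fix a b assume "a \<in> set (F x)" "b \<in> set (concat (map F xs))"
    then obtain y where "y \<in> set xs" "b \<in> set (F y)" by auto
    then show "R a b" using Cons.prems(1) Cons.prems(3)[of x y a b] \<open>a \<in> set (F x)\<close> by simp
  qed
  ultimately show ?case using Cons.prems by (simp add: sorted_wrt_append)
qed

lemma occs_conv_concat:
  "occs L u = concat (map (\<lambda>p. map (\<lambda>q. (p, q)) (filter (\<lambda>q. factor u p q \<in> ddotL L) [p..<length u]))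
                         [0..<length u])"
  unfolding occs_def by (simp add: concat_map_if_singleton)

lemma set_occs: "set (occs L u) = {(p, q). p \<le> q \<and> q < length u \<and> factor u p q \<in> ddotL L}"
  unfolding occs_conv_concat by force

lemma sorted_occs: "sorted_wrt (<) (occs L u)"
  unfolding occs_conv_concat
proof (rule sorted_wrt_concat_map[where Q = "(<)"])
  show "sorted_wrt (<) [0..<length u]" by (simp add: sorted_wrt_upt)
qed (auto simp: sorted_wrt_map less_prod_def intro!: sorted_wrt_filter)

lemma sorted_wrt_less_nth_less_imp:
  fixes xs :: "'c::linorder list"
  assumes "sorted_wrt (<) xs" "i < length xs" "j < length xs" "xs ! i < xs ! j"
  shows "i < j"
proof (rule ccontr)
  assume "\<not> i < j"
  then have "j < i \<or> i = j" by linarith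
  then show False
    using sorted_wrt_nth_less[OF assms(1), of j i] assms(2,4) by auto
qed

text \<open>The occurrences of factors in ddot L in a word u outside L; with 0-based indices the paper's
p_(i+1), q_(i+1), ddot w_(i+1) and w_i (for 0 < i < m) are P i, Q i, D i and W (i - 1).\<close>

locale ddotL_occurrences =
  fixes L :: "'a list set" and u :: "'a list"
  assumes factorial: "factorial_lang L" and letters_in_L: "\<forall>a. [a] \<in> L"
    and u_notin_L: "u \<notin> L" and u_nonempty: "u \<noteq> []"
begin

definition P where "P i = fst (occs L u ! i)"
definition Q where "Q i = snd (occs L u ! i)"
definition D where "D i = factor u (P i) (Q i)"
definition W where "W i = take (Q (Suc i) - P i - 1) (drop (Suc (P i)) u)"
definition middle where "middle k = concat (map (\<lambda>i. [D i, W i]) [0..<k]) @ [D k]"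

abbreviation "m \<equiv> length (occs L u)"

lemma occs_nth: "occs L u ! i = (P i, Q i)"
  unfolding P_def Q_def by simp

lemma occs_nonempty: "0 < m"
proof -
  obtain p q where "p \<le> q" "q < length u" "factor u p q \<in> ddotL L"
    using exists_ddotL_factor[OF letters_in_L u_nonempty u_notin_L] by blast
  then have "(p, q) \<in> set (occs L u)" by (simp add: set_occs)
  then show ?thesis by (cases "occs L u") auto
qed

lemma occ_ddotL_factor:
  assumes "i < m"
  shows "P i < Q i" "Q i < length u" "factor u (P i) (Q i) \<in> ddotL L"
proof -
  have "(P i, Q i) \<in> set (occs L u)" using assms occs_nth by (metis nth_mem)
  then have a: "P i \<le> Q i" "Q i < length u" "factor u (P i) (Q i) \<in> ddotL L"
    by (auto simp: set_occs)
  then show "Q i < length u" "factor u (P i) (Q i) \<in> ddotL L" by auto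
  show "P i < Q i"
    using length_ddotL_ge_2[OF letters_in_L a(3)] length_factor[OF a(1,2)] by simp
qed

lemma occ_index:
  assumes "p \<le> q" "q < length u" "factor u p q \<in> ddotL L"
  obtains j where "j < m" "P j = p" "Q j = q"
proof -
  have "(p, q) \<in> set (occs L u)" using assms by (simp add: set_occs)
  then obtain j where "j < m" "occs L u ! j = (p, q)" by (metis in_set_conv_nth)
  then show ?thesis using that occs_nth by simp
qed

lemma occ_less_iff_index_less:
  assumes "i < m" "j < m"
  shows "(P i, Q i) < (P j, Q j) \<longleftrightarrow> i < j"
  using sorted_wrt_less_nth_less_imp[OF sorted_occs, of i L u j]
    sorted_wrt_nth_less[OF sorted_occs, of i j L u] assms occs_nth by auto

lemma occ_nested_eq:
  assumes "i < m" "P i \<le> p" "p \<le> q" "q \<le> Q i" "factor u p q \<in> ddotL L"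
  shows "P i = p \<and> Q i = q"
  using ddotL_factor_nested_eq[OF factorial assms(2-4) occ_ddotL_factor(2,3)[OF assms(1)] assms(5)] .

lemma occ_strict_mono:
  assumes "Suc i < m"
  shows "P i < P (Suc i)" "Q i < Q (Suc i)"
proof -
  have i: "i < m" using assms by simp
  have lt: "(P i, Q i) < (P (Suc i), Q (Suc i))"
    using occ_less_iff_index_less[OF i assms] by simp
  show P_less: "P i < P (Suc i)"
  proof (rule ccontr)
    assume "\<not> P i < P (Suc i)"
    then have "P i = P (Suc i)" "Q i < Q (Suc i)" using lt by (auto simp: less_prod_def)
    moreover from this have "Q (Suc i) = Q i"
      using occ_nested_eq[OF assms _ _ _ occ_ddotL_factor(3)[OF i]] occ_ddotL_factor(1)[OF i] by auto
    ultimately show False by simp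
  qed
  show "Q i < Q (Suc i)"
  proof (rule ccontr)
    assume "\<not> Q i < Q (Suc i)"
    then have "P i = P (Suc i)"
      using occ_nested_eq[OF i _ _ _ occ_ddotL_factor(3)[OF assms]] P_less occ_ddotL_factor(1)[OF assms] by auto
    then show False using P_less by simp
  qed
qed

lemma no_ddotL_factor_between:
  assumes "Suc i < m" "P i < p" "p \<le> q" "q < Q (Suc i)" "factor u p q \<in> ddotL L"
  shows False
proof -
  obtain j where j: "j < m" "P j = p" "Q j = q"
    using occ_index[OF assms(3) _ assms(5)] assms(4) occ_ddotL_factor(2)[OF assms(1)] by auto
  show False
  proof (cases "p \<le> P (Suc i)")
    case True
    have "i < j"
      using occ_less_iff_index_less[of i j] j assms(1,2) by (simp add: less_prod_def)
    moreover have "j < Suc i"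
      using occ_less_iff_index_less[of j "Suc i"] j True assms(1,4) by (auto simp: less_prod_def)
    ultimately show False by simp
  next
    case False
    then have "P (Suc i) = p"
      using occ_nested_eq[OF assms(1) _ assms(3) _ assms(5)] assms(4) by auto
    then show False using False by simp
  qed
qed

lemma no_ddotL_factor_after:
  assumes "P (m - 1) < p" "p \<le> q" "q < length u" "factor u p q \<in> ddotL L"
  shows False
proof -
  obtain j where j: "j < m" "P j = p" "Q j = q" using occ_index[OF assms(2-4)] by blast
  have "m - 1 < j"
    using occ_less_iff_index_less[of "m - 1" j] j assms occs_nonempty by (simp add: less_prod_def)
  then show False using j by simp
qed

lemma no_ddotL_factor_before:
  assumes "p \<le> q" "q < Q 0" "factor u p q \<in> ddotL L"
  shows False
proof -
  obtain j where j: "j < m" "P j = p" "Q j = q"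
    using occ_index[OF assms(1) _ assms(3)] assms(2) occ_ddotL_factor(2)[OF occs_nonempty] by auto
  have "j \<noteq> 0" using j assms(2) by (cases j) auto
  then have "(P 0, Q 0) < (P j, Q j)" using occ_less_iff_index_less[OF occs_nonempty j(1)] by simp
  then have "P 0 \<le> p" using j by (auto simp: less_prod_def)
  then have "Q 0 = q" using occ_nested_eq[OF occs_nonempty _ assms(1) _ assms(3)] assms(2) by auto
  then show False using assms(2) by simp
qed

lemma prefix_in_L: "take (Q 0) u \<in> L"
proof -
  note o = occ_ddotL_factor[OF occs_nonempty]
  have "factor u 0 (Q 0 - 1) \<in> L"
  proof (rule factor_in_L_if_no_ddotL_factor[OF letters_in_L], safe)
    fix p q assume "p \<le> q" "q \<le> Q 0 - 1" "factor u p q \<in> ddotL L"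
    moreover from this have "q < Q 0" using o(1) by linarith
    ultimately show False using no_ddotL_factor_before by blast
  qed (use o in auto)
  moreover have "factor u 0 (Q 0 - 1) = take (Q 0) u" unfolding factor_def using o by simp
  ultimately show ?thesis by simp
qed

lemma W_in_L:
  assumes "Suc i < m"
  shows "W i \<in> L"
proof -
  note o = occ_ddotL_factor[of i] occ_ddotL_factor[of "Suc i"] occ_strict_mono[OF assms]
  have "factor u (Suc (P i)) (Q (Suc i) - 1) \<in> L"
  proof (rule factor_in_L_if_no_ddotL_factor[OF letters_in_L], safe)
    fix p q assume "Suc (P i) \<le> p" "p \<le> q" "q \<le> Q (Suc i) - 1" "factor u p q \<in> ddotL L"
    moreover from this have "P i < p" "q < Q (Suc i)" using o by linarith+
    ultimately show False using no_ddotL_factor_between[OF assms] by blast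
  qed (use o assms in auto)
  moreover have "factor u (Suc (P i)) (Q (Suc i) - 1) = W i"
    unfolding factor_def W_def using o assms by (simp add: Suc_diff_Suc)
  ultimately show ?thesis by simp
qed

lemma suffix_in_L: "drop (Suc (P (m - 1))) u \<in> L"
proof -
  note o = occ_ddotL_factor[of "m - 1"] occs_nonempty
  have "factor u (Suc (P (m - 1))) (length u - 1) \<in> L"
  proof (rule factor_in_L_if_no_ddotL_factor[OF letters_in_L], safe)
    fix p q assume "Suc (P (m - 1)) \<le> p" "p \<le> q" "q \<le> length u - 1" "factor u p q \<in> ddotL L"
    moreover from this have "P (m - 1) < p" "q < length u" using u_nonempty by linarith+
    ultimately show False using no_ddotL_factor_after by blast
  qed (use o in auto)
  moreover have "factor u (Suc (P (m - 1))) (length u - 1) = drop (Suc (P (m - 1))) u"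
    unfolding factor_def using o u_nonempty by simp
  ultimately show ?thesis by simp
qed

lemma sc_conv: "sc L u = take (Q 0) u # middle (m - 1) @ [drop (Suc (P (m - 1))) u]"
proof -
  obtain k where k: "m = Suc k" using occs_nonempty by (cases m) auto
  have "sc L u = take (Q 0) u # concat (map (\<lambda>i. [D i, if Suc i < m then W i else drop (Suc (P i)) u]) [0..<m])"
    using u_notin_L unfolding sc_def P_def Q_def D_def W_def by (simp add: Let_def)
  moreover have "map (\<lambda>i. [D i, if i < k then W i else drop (Suc (P i)) u]) [0..<k]
      = map (\<lambda>i. [D i, W i]) [0..<k]"
    by (rule map_cong) auto
  ultimately show ?thesis by (simp add: k middle_def)
qed

lemma middle_Suc: "middle (Suc k) = middle k @ [W k, D (Suc k)]"
  unfolding middle_def by simp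

end

lemma drop_conv_take_factor_drop:
  assumes "a \<le> p" "p \<le> q" "q < length u"
  shows "drop a u = take (p - a) (drop a u) @ factor u p q @ drop (Suc q) u"
proof -
  have "drop a u = drop a (take p u @ factor u p q @ drop (Suc q) u)"
    using take_factor_drop[OF assms(2,3)] by simp
  also have "\<dots> = drop a (take p u) @ factor u p q @ drop (Suc q) u"
    using assms by (simp add: drop_append)
  finally show ?thesis by (simp add: drop_take)
qed

lemma take_append_butlast_factor:
  assumes "a \<le> p" "p < q" "q < length u"
  shows "take (p - a) (drop a u) @ butlast (factor u p q) = take (q - a) (drop a u)"
proof -
  have "butlast (factor u p q) = take (q - p) (drop p u)"
    unfolding factor_def using assms by (simp add: butlast_take)
  moreover have "take (q - a) (drop a u) = take (p - a) (drop a u) @ take (q - p) (drop p u)"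
    using take_add[of "p - a" "q - p" "drop a u"] assms by simp
  ultimately show ?thesis by simp
qed

lemma tl_factor_append_drop:
  assumes "p < q" "q < length u"
  shows "tl (factor u p q) @ drop (Suc q) u = drop (Suc p) u"
proof -
  have "tl (factor u p q) = take (q - p) (drop (Suc p) u)"
    unfolding factor_def using assms by (simp add: tl_take drop_Suc tl_drop)
  moreover have "drop (Suc q) u = drop (q - p) (drop (Suc p) u)" using assms by simp
  ultimately show ?thesis by (metis append_take_drop_id)
qed

lemma flatten_simps [simp]:
  "flatten [] = []" "flatten (Inl a # xs) = Inl a # flatten xs"
  "flatten (Inr g # xs) = map Inr g @ flatten xs" "flatten (xs @ ys) = flatten xs @ flatten ys"
  "flatten (map Inl u) = map Inl u"
  unfolding flatten_def by (simp_all, induction u) auto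

definition join_segs :: "('b list \<times> 'a list) list \<Rightarrow> ('a + 'b) list" where
  "join_segs sg = concat (map (\<lambda>(g, u). map Inr g @ map Inl u) sg)"

fun segs_wf :: "('b list \<times> 'a list) list \<Rightarrow> bool" where
  "segs_wf [] = True"
| "segs_wf [p] = (fst p \<noteq> [])"
| "segs_wf (p # q # ps) = (fst p \<noteq> [] \<and> snd p \<noteq> [] \<and> segs_wf (q # ps))"

lemma map_Inr_projr_takeWhile: "map (Inr \<circ> projr) (takeWhile (Not \<circ> isl) zs) = takeWhile (Not \<circ> isl) zs"
  by (rule map_idI) (auto dest: set_takeWhileD)

lemma map_Inl_projl_takeWhile: "map (Inl \<circ> projl) (takeWhile isl zs) = takeWhile isl zs"
  by (rule map_idI) (auto dest: set_takeWhileD)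

lemma join_segs_segs: "join_segs (segs ys) = ys"
proof (induction ys rule: segs.induct)
  case 1 then show ?case by (simp add: join_segs_def)
next
  case (2 x xs)
  define r where "r = dropWhile (Not \<circ> isl) (x # xs)"
  have "join_segs (segs (x # xs))
      = takeWhile (Not \<circ> isl) (x # xs) @ takeWhile isl r @ join_segs (segs (dropWhile isl r))"
    by (simp only: segs.simps(2) Let_def r_def[symmetric])
       (simp add: join_segs_def map_Inr_projr_takeWhile map_Inl_projl_takeWhile del: takeWhile.simps)
  also have "\<dots> = takeWhile (Not \<circ> isl) (x # xs) @ r"
    using 2 r_def by (simp del: takeWhile.simps dropWhile.simps)
  also have "\<dots> = x # xs" unfolding r_def by (rule takeWhile_dropWhile_id)
  finally show ?case .
qed

lemma segs_nonempty: "ys \<noteq> [] \<Longrightarrow> segs ys \<noteq> []"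
  by (cases ys) (auto simp: Let_def)

lemma segs_wf_segs: "ys = [] \<or> \<not> isl (hd ys) \<Longrightarrow> segs_wf (segs ys)"
proof (induction ys rule: segs.induct)
  case 1 then show ?case by simp
next
  case (2 x xs)
  define r where "r = dropWhile (Not \<circ> isl) (x # xs)"
  define rest where "rest = dropWhile isl r"
  have x: "\<not> isl x" using 2(2) by simp
  have IH: "segs_wf (segs rest)"
    using 2(1)[OF r_def] unfolding rest_def using hd_dropWhile[of isl r] by blast
  have e: "segs (x # xs)
      = (map projr (takeWhile (Not \<circ> isl) (x # xs)), map projl (takeWhile isl r)) # segs rest"
    by (simp only: segs.simps(2) Let_def r_def[symmetric] rest_def[symmetric])
  have g: "map projr (takeWhile (Not \<circ> isl) (x # xs)) \<noteq> []" using x by simp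
  show ?case
  proof (cases "segs rest")
    case Nil then show ?thesis using e g by simp
  next
    case (Cons q qs)
    then have "r \<noteq> []" unfolding rest_def by auto
    then have "isl (hd r)" using hd_dropWhile[of "Not \<circ> isl" "x # xs"] r_def by simp
    then have "takeWhile isl r \<noteq> []" using \<open>r \<noteq> []\<close> by (cases r) auto
    then show ?thesis using e g IH Cons by simp
  qed
qed

lemma segs_wf_fst: "segs_wf sg \<Longrightarrow> p \<in> set sg \<Longrightarrow> fst p \<noteq> []"
  by (induction sg rule: segs_wf.induct) auto

lemma merge_Cons:
  assumes "\<not> (\<exists>g h ys. x # xs = Inr g # Inr h # ys)"
  shows "merge rep (x # xs) = x # merge rep xs"
proof (cases x)
  case (Inr g)
  show ?thesis
  proof (cases xs)
    case (Cons y zs)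
    then show ?thesis using Inr assms by (cases y) auto
  qed (use Inr in simp)
qed simp

locale T_presentation =
  fixes L :: "'a list set" and RG :: "('b list \<times> 'b list) set"
    and rep :: "'b list \<Rightarrow> 'b list" and e :: "'b list" and f :: "'a list \<Rightarrow> 'b list"
  assumes L_factorial: "factorial_lang L" and L_letters: "\<forall>a. [a] \<in> L"
    and reps: "fixed_reps RG rep" and e_elem: "e \<in> Gelems rep" and e_identity: "is_identity RG e"
    and f_elem: "\<forall>u \<in> L \<union> ddotL L. f u \<in> Gelems rep"
begin

definition T_eq :: "('a + 'b) list \<Rightarrow> ('a + 'b) list \<Rightarrow> bool" (infix "\<approx>" 50) where
  "a \<approx> b \<longleftrightarrow> (a, b) \<in> pres_eq (RG_X RG \<union> Rf L f e)"

lemma T_refl: "a \<approx> a"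
  unfolding T_eq_def by (rule pres_eq_refl)

lemma T_sym: "a \<approx> b \<Longrightarrow> b \<approx> a"
  unfolding T_eq_def by (rule pres_eq_sym)

lemma T_trans [trans]: "a \<approx> b \<Longrightarrow> b \<approx> c \<Longrightarrow> a \<approx> c"
  unfolding T_eq_def by (rule pres_eq_trans)

lemma T_cong: "a \<approx> b \<Longrightarrow> x @ a @ y \<approx> x @ b @ y"
  unfolding T_eq_def by (rule pres_eq_append_cong)

lemma T_cong_left: "a \<approx> b \<Longrightarrow> x @ a \<approx> x @ b"
  using T_cong[of a b x "[]"] by simp

lemma T_cong_right: "a \<approx> b \<Longrightarrow> a @ y \<approx> b @ y"
  using T_cong[of a b "[]" y] by simp

lemma T_map_Inr: "(a, b) \<in> pres_eq RG \<Longrightarrow> map Inr a \<approx> map Inr b"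
  unfolding T_eq_def by (rule pres_eq_mono[OF _ pres_eq_map_Inr]) auto

lemma rep_nonempty: "x \<noteq> [] \<Longrightarrow> rep x \<noteq> []"
  using reps unfolding fixed_reps_def by blast

lemma rep_T: "x \<noteq> [] \<Longrightarrow> map Inr (rep x) \<approx> map Inr x"
  using reps unfolding fixed_reps_def by (blast intro: T_map_Inr)

lemma Gelems_nonempty: "g \<in> Gelems rep \<Longrightarrow> g \<noteq> []"
  unfolding Gelems_def using rep_nonempty by auto

lemma e_nonempty: "e \<noteq> []"
  using Gelems_nonempty e_elem .

lemma f_nonempty: "u \<in> L \<or> u \<in> ddotL L \<Longrightarrow> f u \<noteq> []"
  using f_elem Gelems_nonempty by blast

lemma append_e_T: "g \<noteq> [] \<Longrightarrow> map Inr g @ map Inr e \<approx> map Inr g"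
  using e_identity T_map_Inr unfolding is_identity_def by (metis map_append)

lemma e_append_T: "g \<noteq> [] \<Longrightarrow> map Inr e @ map Inr g \<approx> map Inr g"
  using e_identity T_map_Inr unfolding is_identity_def by (metis map_append)

lemma e_L_e_T: "u \<in> L \<Longrightarrow> map Inr e @ map Inl u @ map Inr e \<approx> map Inr (f u)"
  unfolding T_eq_def by (rule pres_eq_rel) (auto simp: Rf_def)

lemma ddotL_T: "v \<in> ddotL L \<Longrightarrow> map Inl v \<approx> map Inl (butlast v) @ map Inr (f v) @ map Inl (tl v)"
  unfolding T_eq_def by (rule pres_eq_rel) (auto simp: Rf_def)

lemma absorb_L_T:
  assumes "g \<noteq> []" "h \<noteq> []" "u \<in> L"
  shows "map Inr g @ map Inl u @ map Inr h \<approx> map Inr g @ map Inr (f u) @ map Inr h"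
proof -
  have "map Inr g @ map Inl u @ map Inr h \<approx> (map Inr g @ map Inr e) @ map Inl u @ map Inr h"
    by (rule T_cong_right[OF T_sym[OF append_e_T[OF assms(1)]]])
  also have "\<dots> \<approx> (map Inr g @ map Inr e) @ map Inl u @ (map Inr e @ map Inr h)"
    using T_cong_left[OF T_sym[OF e_append_T[OF assms(2)]], of "(map Inr g @ map Inr e) @ map Inl u"]
    by simp
  also have "\<dots> = map Inr g @ (map Inr e @ map Inl u @ map Inr e) @ map Inr h" by simp
  also have "\<dots> \<approx> map Inr g @ map Inr (f u) @ map Inr h" by (rule T_cong[OF e_L_e_T[OF assms(3)]])
  finally show ?thesis .
qed

lemma ddotL_occurrence_T:
  assumes "a \<le> p" "p < q" "q < length u" "factor u p q \<in> ddotL L"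
  shows "map Inl (drop a u)
    \<approx> map Inl (take (q - a) (drop a u)) @ map Inr (f (factor u p q)) @ map Inl (drop (Suc p) u)"
proof -
  have "map Inl (drop a u)
      = map Inl (take (p - a) (drop a u)) @ map Inl (factor u p q) @ map Inl (drop (Suc q) u)"
    using drop_conv_take_factor_drop[of a p q u] assms(1-3) by (metis map_append less_imp_le)
  also have "\<dots> \<approx> map Inl (take (p - a) (drop a u))
      @ (map Inl (butlast (factor u p q)) @ map Inr (f (factor u p q)) @ map Inl (tl (factor u p q)))
      @ map Inl (drop (Suc q) u)"
    by (rule T_cong[OF ddotL_T[OF assms(4)]])
  also have "\<dots> = map Inl (take (q - a) (drop a u)) @ map Inr (f (factor u p q)) @ map Inl (drop (Suc p) u)"
    using take_append_butlast_factor[OF assms(1-3)] tl_factor_append_drop[OF assms(2,3)]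
    by (metis append.assoc map_append)
  finally show ?thesis .
qed

end

locale T_nonmember = T_presentation L RG rep e f + ddotL_occurrences L u
  for L :: "'a list set" and RG :: "('b list \<times> 'b list) set"
    and rep :: "'b list \<Rightarrow> 'b list" and e :: "'b list" and f :: "'a list \<Rightarrow> 'b list"
    and u :: "'a list"
begin

lemma f_middle_nonempty: "k < m \<Longrightarrow> concat (map f (middle k)) \<noteq> []"
  using f_nonempty occ_ddotL_factor(3) unfolding middle_def D_def by simp

lemma prefix_rewrite_T:
  "k < m \<Longrightarrow> map Inl u
     \<approx> map Inl (take (Q 0) u) @ map Inr (concat (map f (middle k))) @ map Inl (drop (Suc (P k)) u)"
proof (induction k)
  case 0
  show ?case
    using ddotL_occurrence_T[of 0 "P 0" "Q 0" u] occ_ddotL_factor[OF 0] by (simp add: middle_def D_def)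
next
  case (Suc k)
  let ?x = "map Inl (take (Q 0) u) @ map Inr (concat (map f (middle k)))"
  have k: "k < m" using Suc.prems by simp
  have fD: "f (D (Suc k)) \<noteq> []"
    using f_nonempty occ_ddotL_factor(3)[OF Suc.prems] unfolding D_def by blast
  have "map Inl u \<approx> ?x @ map Inl (drop (Suc (P k)) u)"
    using Suc.IH k by simp
  also have "\<dots> \<approx> ?x @ map Inl (W k) @ map Inr (f (D (Suc k))) @ map Inl (drop (Suc (P (Suc k))) u)"
    using T_cong_left[OF ddotL_occurrence_T[of "Suc (P k)" "P (Suc k)" "Q (Suc k)" u], of ?x]
      occ_ddotL_factor[OF Suc.prems] occ_strict_mono[OF Suc.prems] unfolding W_def D_def by simp
  also have "\<dots> \<approx> map Inl (take (Q 0) u)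
      @ (map Inr (concat (map f (middle k))) @ map Inr (f (W k)) @ map Inr (f (D (Suc k))))
      @ map Inl (drop (Suc (P (Suc k))) u)"
    using T_cong[OF absorb_L_T[OF f_middle_nonempty[OF k] fD W_in_L[OF Suc.prems]],
        of "map Inl (take (Q 0) u)" "map Inl (drop (Suc (P (Suc k))) u)"] by simp
  finally show ?case by (simp add: middle_Suc)
qed

end

context T_presentation
begin

text \<open>The paper's g_w, before replacing it by its fixed representative.\<close>

definition gword :: "'a list \<Rightarrow> 'b list" where
  "gword u = concat (map f (butlast (tl (sc L u))))"

lemma gw_conv_gword: "gw L rep f u = rep (gword u)"
  unfolding gw_def gword_def ..

lemma sc_decomposition:
  assumes "u \<notin> L" "u \<noteq> []"
  shows "hd (sc L u) \<in> L" "last (sc L u) \<in> L" "gword u \<noteq> []"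
    and "concat (map f (sc L u)) = f (hd (sc L u)) @ gword u @ f (last (sc L u))"
    and "map Inl u \<approx> map Inl (hd (sc L u)) @ map Inr (gword u) @ map Inl (last (sc L u))"
proof -
  interpret T_nonmember L RG rep e f u
    using assms L_factorial L_letters by unfold_locales
  have m: "m - 1 < m" using occs_nonempty by simp
  note sc = sc_conv gword_def
  show "hd (sc L u) \<in> L" "last (sc L u) \<in> L" using prefix_in_L suffix_in_L sc by simp_all
  show "gword u \<noteq> []" using f_middle_nonempty[OF m] sc by simp
  show "concat (map f (sc L u)) = f (hd (sc L u)) @ gword u @ f (last (sc L u))" using sc by simp
  show "map Inl u \<approx> map Inl (hd (sc L u)) @ map Inr (gword u) @ map Inl (last (sc L u))"
    using prefix_rewrite_T[OF m] sc by simp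
qed

lemma checkA_T: "u \<noteq> [] \<Longrightarrow> map Inl u \<approx> checkA L rep f u"
proof (cases "u \<in> L")
  case True then show ?thesis by (simp add: checkA_def T_refl)
next
  case False
  assume u: "u \<noteq> []"
  note d = sc_decomposition[OF False u]
  have "map Inl u \<approx> map Inl (hd (sc L u)) @ map Inr (gword u) @ map Inl (last (sc L u))"
    by (rule d(5))
  also have "\<dots> \<approx> map Inl (hd (sc L u)) @ map Inr (rep (gword u)) @ map Inl (last (sc L u))"
    by (rule T_cong[OF T_sym[OF rep_T[OF d(3)]]])
  finally show ?thesis using False by (simp add: checkA_def gw_conv_gword)
qed

lemma hatf_nonempty: "hatf L rep e f u \<noteq> []"
  using e_nonempty f_nonempty rep_nonempty sc_decomposition(1,4)
  unfolding hatf_def by auto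

lemma absorb_T:
  assumes "g \<noteq> []" "h \<noteq> []" "u \<noteq> []"
  shows "map Inr g @ map Inl u @ map Inr h \<approx> map Inr g @ map Inr (hatf L rep e f u) @ map Inr h"
proof (cases "u \<in> L")
  case True then show ?thesis using absorb_L_T[OF assms(1,2) True] assms(3) by (simp add: hatf_def)
next
  case False
  note d = sc_decomposition[OF False assms(3)]
  define a where "a = hd (sc L u)"
  define b where "b = last (sc L u)"
  define M where "M = gword u"
  have "map Inr g @ map Inl u @ map Inr h \<approx> map Inr g @ (map Inl a @ map Inr M @ map Inl b) @ map Inr h"
    unfolding a_def b_def M_def by (rule T_cong[OF d(5)])
  also have "\<dots> = (map Inr g @ map Inl a @ map Inr M) @ map Inl b @ map Inr h" by simp
  also have "\<dots> \<approx> (map Inr g @ map Inr (f a) @ map Inr M) @ map Inl b @ map Inr h"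
    using absorb_L_T[OF assms(1) d(3) d(1)] unfolding a_def M_def by (rule T_cong_right)
  also have "\<dots> = (map Inr g @ map Inr (f a)) @ map Inr M @ map Inl b @ map Inr h" by simp
  also have "\<dots> \<approx> (map Inr g @ map Inr (f a)) @ map Inr M @ map Inr (f b) @ map Inr h"
    using absorb_L_T[OF d(3) assms(2) d(2)] unfolding b_def M_def by (rule T_cong_left)
  also have "\<dots> = map Inr g @ map Inr (concat (map f (sc L u))) @ map Inr h"
    using d(4) unfolding a_def b_def M_def by simp
  also have "\<dots> \<approx> map Inr g @ map Inr (hatf L rep e f u) @ map Inr h"
  proof -
    have "concat (map f (sc L u)) \<noteq> []" using d(1,4) f_nonempty by simp
    from T_cong[OF T_sym[OF rep_T[OF this]]] show ?thesis
      using False assms(3) by (simp add: hatf_def)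
  qed
  finally show ?thesis .
qed

lemma grave_T:
  assumes "g \<noteq> []"
  shows "map Inl u @ map Inr g \<approx> flatten (grave L rep f u) @ map Inr g"
proof (cases "u = [] \<or> u \<in> L")
  case True then show ?thesis by (simp add: grave_def T_refl)
next
  case False
  then have u: "u \<noteq> []" "u \<notin> L" by auto
  note d = sc_decomposition[OF u(2,1)]
  define a where "a = hd (sc L u)"
  define b where "b = last (sc L u)"
  define M where "M = gword u"
  have rM: "rep M \<noteq> []" using rep_nonempty d(3) M_def by simp
  have "map Inl u @ map Inr g \<approx> (map Inl a @ map Inr M @ map Inl b) @ map Inr g"
    unfolding a_def b_def M_def by (rule T_cong_right[OF d(5)])
  also have "\<dots> \<approx> map Inl a @ (map Inr (rep M) @ map Inl b @ map Inr g)"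
    using T_cong[OF T_sym[OF rep_T], of M "map Inl a" "map Inl b @ map Inr g"] d(3) M_def by simp
  also have "\<dots> \<approx> map Inl a @ (map Inr (rep M) @ map Inr (f b) @ map Inr g)"
    using d(2) unfolding b_def by (intro T_cong_left absorb_L_T rM assms)
  also have "\<dots> = map Inl a @ map Inr (rep M @ f b) @ map Inr g" by simp
  also have "\<dots> \<approx> map Inl a @ map Inr (rep (rep M @ f b)) @ map Inr g"
    by (rule T_cong[OF T_sym[OF rep_T]]) (use rM in simp)
  finally show ?thesis using u by (simp add: grave_def gw_conv_gword a_def b_def M_def)
qed

lemma acute_T:
  assumes "g \<noteq> []"
  shows "map Inr g @ map Inl u \<approx> map Inr g @ flatten (acute L rep f u)"
proof (cases "u = [] \<or> u \<in> L")
  case True then show ?thesis by (simp add: acute_def T_refl)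
next
  case False
  then have u: "u \<noteq> []" "u \<notin> L" by auto
  note d = sc_decomposition[OF u(2,1)]
  define a where "a = hd (sc L u)"
  define b where "b = last (sc L u)"
  define M where "M = gword u"
  have rM: "rep M \<noteq> []" using rep_nonempty d(3) M_def by simp
  have "map Inr g @ map Inl u \<approx> map Inr g @ (map Inl a @ map Inr M @ map Inl b)"
    unfolding a_def b_def M_def by (rule T_cong_left[OF d(5)])
  also have "\<dots> \<approx> (map Inr g @ map Inl a @ map Inr (rep M)) @ map Inl b"
    using T_cong[OF T_sym[OF rep_T], of M "map Inr g @ map Inl a" "map Inl b"] d(3) M_def by simp
  also have "\<dots> \<approx> (map Inr g @ map Inr (f a) @ map Inr (rep M)) @ map Inl b"
    using d(1) unfolding a_def by (intro T_cong_right absorb_L_T rM assms)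
  also have "\<dots> = map Inr g @ map Inr (f a @ rep M) @ map Inl b" by simp
  also have "\<dots> \<approx> map Inr g @ map Inr (rep (f a @ rep M)) @ map Inl b"
    by (rule T_cong[OF T_sym[OF rep_T]]) (use rM in simp)
  finally show ?thesis using u by (simp add: acute_def gw_conv_gword a_def b_def M_def)
qed

fun mid_items :: "('b list \<times> 'a list) list \<Rightarrow> ('a + 'b list) list" where
  "mid_items [] = []"
| "mid_items (p # ps) = Inr (fst p) # (if ps = [] then [] else Inr (hatf L rep e f (snd p)) # mid_items ps)"

lemma mid_items_conv_concat:
  "concat (map (\<lambda>i. [Inr (fst (sg ! i))] @
      (if Suc i < length sg then [Inr (hatf L rep e f (snd (sg ! i)))] else [])) [0..<length sg])
    = mid_items sg"
proof (induction sg)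
  case Nil then show ?case by simp
next
  case (Cons p ps)
  show ?case
    by (simp only: length_Cons map_upt_Suc nth_Cons_Suc nth_Cons_0 Suc_less_eq) (use Cons in auto)
qed

lemma merge_T: "(\<forall>g. Inr g \<in> set xs \<longrightarrow> g \<noteq> []) \<Longrightarrow> flatten xs \<approx> flatten (merge rep xs)"
proof (induction xs rule: length_induct)
  case (1 xs)
  show ?case
  proof (cases "\<exists>g h ys. xs = Inr g # Inr h # ys")
    case True
    then obtain g h ys where xs: "xs = Inr g # Inr h # ys" by blast
    have gh: "g @ h \<noteq> []" using "1.prems" xs by simp
    have "flatten xs = map Inr (g @ h) @ flatten ys" using xs by simp
    also have "\<dots> \<approx> flatten (Inr (rep (g @ h)) # ys)"
      using T_cong_right[OF T_sym[OF rep_T[OF gh]]] by simp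
    also have "\<dots> \<approx> flatten (merge rep (Inr (rep (g @ h)) # ys))"
    proof -
      have "\<forall>g'. Inr g' \<in> set (Inr (rep (g @ h)) # ys) \<longrightarrow> g' \<noteq> []"
        using "1.prems" xs rep_nonempty[OF gh] by auto
      moreover have "length (Inr (rep (g @ h)) # ys) < length xs" using xs by simp
      ultimately show ?thesis using "1.IH" by blast
    qed
    finally show ?thesis using xs by simp
  next
    case False
    show ?thesis
    proof (cases xs)
      case Nil then show ?thesis by (simp add: T_refl)
    next
      case (Cons x ys)
      have "flatten ys \<approx> flatten (merge rep ys)"
        using "1.IH" "1.prems" Cons by auto
      then have "flatten [x] @ flatten ys \<approx> flatten [x] @ flatten (merge rep ys)"
        by (rule T_cong_left)
      moreover have "merge rep xs = x # merge rep ys" using merge_Cons False Cons by blast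
      ultimately show ?thesis using Cons by (simp add: flatten_def)
    qed
  qed
qed

lemma join_segs_T:
  "segs_wf sg \<Longrightarrow> sg \<noteq> [] \<Longrightarrow>
    join_segs sg \<approx> flatten (mid_items sg) @ flatten (acute L rep f (snd (last sg)))"
proof (induction sg)
  case Nil then show ?case by simp
next
  case (Cons p ps)
  obtain g u where p: "p = (g, u)" by (cases p)
  show ?case
  proof (cases ps)
    case Nil
    then show ?thesis using acute_T[of g u] Cons.prems p by (simp add: join_segs_def)
  next
    case (Cons q qs)
    have gu: "g \<noteq> []" "u \<noteq> []" "segs_wf ps" using Cons.prems(1) \<open>ps = q # qs\<close> p by auto
    have q: "fst q \<noteq> []" using segs_wf_fst[OF gu(3)] \<open>ps = q # qs\<close> by simp
    define A where "A = flatten (acute L rep f (snd (last ps)))"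
    define R where "R = (if qs = [] then [] else map Inr (hatf L rep e f (snd q)) @ flatten (mid_items qs))"
    have "join_segs (p # ps) = map Inr g @ map Inl u @ join_segs ps" using p by (simp add: join_segs_def)
    also have "\<dots> \<approx> map Inr g @ map Inl u @ (flatten (mid_items ps) @ A)"
      using T_cong_left[OF Cons.IH[OF gu(3)], of "map Inr g @ map Inl u"] \<open>ps = q # qs\<close> A_def by simp
    also have "\<dots> = map Inr g @ map Inl u @ map Inr (fst q) @ (R @ A)"
      using \<open>ps = q # qs\<close> R_def by simp
    also have "\<dots> \<approx> map Inr g @ map Inr (hatf L rep e f u) @ map Inr (fst q) @ (R @ A)"
      using T_cong_right[OF absorb_T[OF gu(1) q gu(2)], of "R @ A"] by simp
    also have "\<dots> = flatten (mid_items (p # ps)) @ flatten (acute L rep f (snd (last (p # ps))))"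
      using \<open>ps = q # qs\<close> R_def A_def p by simp
    finally show ?thesis .
  qed
qed

lemma group_items_nonempty:
  assumes "segs_wf sg" "Inr g \<in> set (grave L rep f u @ mid_items sg @ acute L rep f v)"
  shows "g \<noteq> []"
proof -
  have grave: "g \<noteq> []" if "Inr g \<in> set (grave L rep f u)" for g
  proof (cases "u = [] \<or> u \<in> L")
    case False
    then have "g = rep (gw L rep f u @ f (last (sc L u)))" using that by (auto simp: grave_def)
    moreover have "f (last (sc L u)) \<noteq> []" using False sc_decomposition(2) f_nonempty by blast
    ultimately show ?thesis using rep_nonempty by simp
  qed (use that in \<open>auto simp: grave_def\<close>)
  have acute: "g \<noteq> []" if "Inr g \<in> set (acute L rep f v)" for g
  proof (cases "v = [] \<or> v \<in> L")
    case False
    then have "g = rep (f (hd (sc L v)) @ gw L rep f v)" using that by (auto simp: acute_def)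
    moreover have "f (hd (sc L v)) \<noteq> []" using False sc_decomposition(1) f_nonempty by blast
    ultimately show ?thesis using rep_nonempty by simp
  qed (use that in \<open>auto simp: acute_def\<close>)
  have "g \<noteq> []" if "Inr g \<in> set (mid_items sg)" for g
    using assms(1) that by (induction sg rule: segs_wf.induct) (auto simp: not_sym[OF hatf_nonempty])
  with grave acute show ?thesis using assms(2) by auto
qed

lemma checkX_T:
  assumes "w \<noteq> []"
  shows "w \<approx> checkX L rep e f w"
proof (cases "\<forall>x\<in>set w. isl x")
  case True
  then have "w = map Inl (map projl w)" by (simp add: map_idI)
  then show ?thesis using True checkA_T[of "map projl w"] assms by (simp add: checkX_def)
next
  case False
  define u0 where "u0 = map projl (takeWhile isl w)"
  define sg where "sg = segs (dropWhile isl w)"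
  have ne: "dropWhile isl w \<noteq> []" using False by auto
  have sg: "segs_wf sg" "sg \<noteq> []"
    using segs_wf_segs hd_dropWhile[OF ne] segs_nonempty[OF ne] unfolding sg_def by auto
  obtain p ps where sp: "sg = p # ps" using sg(2) by (cases sg) auto
  have "fst p \<noteq> []" using segs_wf_fst[OF sg(1)] sp by simp
  define A where "A = flatten (acute L rep f (snd (last sg)))"
  define R where "R = (if ps = [] then [] else map Inr (hatf L rep e f (snd p)) @ flatten (mid_items ps))"
  have "w = map Inl u0 @ join_segs sg"
    unfolding u0_def sg_def join_segs_segs by (simp add: map_Inl_projl_takeWhile)
  also have "\<dots> \<approx> map Inl u0 @ (flatten (mid_items sg) @ A)"
    unfolding A_def by (rule T_cong_left[OF join_segs_T[OF sg]])
  also have "\<dots> = (map Inl u0 @ map Inr (fst p)) @ (R @ A)" using sp R_def by simp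
  also have "\<dots> \<approx> (flatten (grave L rep f u0) @ map Inr (fst p)) @ (R @ A)"
    by (rule T_cong_right[OF grave_T[OF \<open>fst p \<noteq> []\<close>]])
  also have "\<dots> = flatten (grave L rep f u0 @ mid_items sg @ acute L rep f (snd (last sg)))"
    using sp R_def A_def by simp
  also have "\<dots> \<approx> flatten (merge rep (grave L rep f u0 @ mid_items sg @ acute L rep f (snd (last sg))))"
    using group_items_nonempty[OF sg(1)] by (blast intro: merge_T)
  also have "\<dots> = checkX L rep e f w"
    unfolding checkX_def if_not_P[OF False] Let_def u0_def[symmetric] sg_def[symmetric]
      mid_items_conv_concat ..
  finally show ?thesis .
qed

end

theorem lemma2:
  fixes L :: "'a list set" and RG :: "('b list \<times> 'b list) set"
    and rep :: "'b list \<Rightarrow> 'b list" and e :: "'b list"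
    and f :: "'a list \<Rightarrow> 'b list" and w :: "('a + 'b) list"
  assumes "L \<noteq> {}" and "factorial_lang L" and "\<forall>a. [a] \<in> L"
    and "group_presentation RG" and "fixed_reps RG rep"
    and "e \<in> Gelems rep" and "is_identity RG e"
    and "\<forall>u \<in> L \<union> ddotL L. f u \<in> Gelems rep"
    and "w \<noteq> []"
  shows "(w, checkX L rep e f w) \<in> pres_eq (RG_X RG \<union> Rf L f e)"
proof -
  interpret T_presentation L RG rep e f
    using assms by unfold_locales
  show ?thesis using checkX_T[OF assms(9)] unfolding T_eq_def .
qed

end
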